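(* Let $A$ be a finite alphabet and $n\ge 1$. Then: (a) there exist $A$, $n$ and a weakly regular $P\subseteq (A^\ast)^n$ whose complement $(A^\ast)^n\setminus P$ is not weakly regular; (b) for all weakly regular $P,Q\subseteq (A^\ast)^n$, the union $P\cup Q$ is weakly regular; (c) there exist $A$, $n$ and weakly regular $P,Q\subseteq(A^\ast)^n$ such that $P\cap Q$ is not weakly regular; (d) for every $n\ge2$ and every weakly regular $P\subseteq (A^\ast)^n$, the language $\{(x_2,\ldots,x_n):(\exists x_1\in A^\ast)(x_1,\ldots,x_n)\in P\}$ is weakly regular; (e) there exist $A$, $n\ge 2$ and a weakly regular $P\subseteq(A^\ast)^n$ such that $\{(x_2,\ldots,x_n):(\forall x_1\in A^\ast)(x_1,\ldots,x_n)\in P\}$ is not weakly regular.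
   Context: An $n$-variable language (predicate) over a finite alphabet $A$ is a subset of $(A^\ast)^n$, $A^\ast$ the set of finite words over $A$. A shuffle of $(w_1,\ldots,w_n)$ is an ordering of all the letters of the $w_i$ respecting the order within each $w_i$; $w\$$ denotes $w$ followed by a new symbol $\$$. Weakly regular: $L$ is weakly regular if it is accepted by an $n$-tape non-deterministic semi-sorted asynchronous automaton, i.e., a non-deterministic finite state automaton over $A\sqcup\{\$\}$ (possibly several start states and $\epsilon$-transitions) with a partition of its states into sets $S_1,\ldots,S_n$; it accepts $(w_1,\ldots,w_n)$ iff there is a path from a start state to an accept state reading a shuffle of $(w_1\$,\ldots,w_n\$)$, where a letter-labelled transition out of a state in $S_i$ reads the next letter of the $i$-th tape ($\epsilon$-transitions read nothing). *)

theory Defs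
  imports Main
begin

(* Transition labels: None = epsilon, Some None = the end marker $,
   Some (Some a) = the letter a of the alphabet.
   The partition S_1,...,S_n of the states is given by  tape :: nat => nat
   (state q belongs to S_(tape q + 1), tapes indexed 0..n-1).
   Tape contents are words over 'a option (None = $). *)

inductive wr_run ::
  "(nat \<times> 'a option option \<times> nat) set \<Rightarrow> (nat \<Rightarrow> nat) \<Rightarrow> nat set
   \<Rightarrow> nat \<Rightarrow> 'a option list list \<Rightarrow> bool"
  for T tape F where
  fin: "q \<in> F \<Longrightarrow> (\<forall>r\<in>set rs. r = []) \<Longrightarrow> wr_run T tape F q rs"
| eps: "(q, None, q') \<in> T \<Longrightarrow> wr_run T tape F q' rs \<Longrightarrow> wr_run T tape F q rs"
| step: "(q, Some c, q') \<in> T \<Longrightarrow> tape q < length rs \<Longrightarrow> rs ! (tape q) = c # r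
         \<Longrightarrow> wr_run T tape F q' (rs[tape q := r]) \<Longrightarrow> wr_run T tape F q rs"

definition add_end :: "'a list \<Rightarrow> 'a option list" where
  "add_end w = map Some w @ [None]"

definition wr_accepts ::
  "nat set \<Rightarrow> (nat \<times> 'a option option \<times> nat) set \<Rightarrow> (nat \<Rightarrow> nat) \<Rightarrow> nat set
   \<Rightarrow> 'a list list \<Rightarrow> bool" where
  "wr_accepts I T tape F ws = (\<exists>q\<in>I. wr_run T tape F q (map add_end ws))"

definition tuples :: "'a set \<Rightarrow> nat \<Rightarrow> 'a list list set" where
  "tuples A n = {ws. length ws = n \<and> (\<forall>w\<in>set ws. w \<in> lists A)}"

definition weakly_regular :: "'a set \<Rightarrow> nat \<Rightarrow> 'a list list set \<Rightarrow> bool" where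
  "weakly_regular A n L =
    (\<exists>(Q::nat set) I F (T :: (nat \<times> 'a option option \<times> nat) set) tape.
       finite Q \<and> I \<subseteq> Q \<and> F \<subseteq> Q \<and>
       T \<subseteq> Q \<times> ({None, Some None} \<union> Some ` Some ` A) \<times> Q \<and>
       (\<forall>q\<in>Q. tape q < n) \<and>
       L = {ws \<in> tuples A n. wr_accepts I T tape F ws})"

end

theory Submission
  imports Defs
begin

text \<open>Union and existential projection are automaton constructions: a disjoint union, and a
  simulation in which the moves on the first tape become \<open>\<epsilon>\<close>-moves guessing its word, the state
  remembering whether its end marker has been guessed yet.

  The negative statements all rest on the language of pairs \<open>(x, y)\<close> over \<open>{0, 1}\<close> with
  \<open>|x|\<^sub>0 = |y| = |x|\<^sub>1\<close>. Each of the two equations is weakly regular, by an automaton that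
  matches every \<open>0\<close> (resp. \<open>1\<close>) of \<open>x\<close> against a letter of \<open>y\<close>. Their conjunction is not: cut
  the accepting runs on \<open>(0\<^sup>i1\<^sup>i, 0\<^sup>i)\<close> when the prefix \<open>0\<^sup>i\<close> has been read. Only finitely
  many states and sets of tapes whose end marker has already been read occur at the cut, so the
  runs for some \<open>i \<noteq> j\<close> can be spliced into an accepting run on some \<open>(0\<^sup>i1\<^sup>j, y)\<close>.
  Non-closure under complement then follows by De Morgan, and for the universal projection take
  the triples \<open>(z, x, y)\<close> with either \<open>z\<close> empty and \<open>|x|\<^sub>0 = |y|\<close>, or \<open>z\<close> non-empty and
  \<open>|x|\<^sub>1 = |y|\<close>.\<close>

lemma tuples_Cons [simp]: "x # xs \<in> tuples A (Suc n) \<longleftrightarrow> x \<in> lists A \<and> xs \<in> tuples A n"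
  by (auto simp: tuples_def)

lemma tuples_Suc: "ws \<in> tuples A (Suc n) \<longleftrightarrow> (\<exists>x xs. ws = x # xs \<and> x \<in> lists A \<and> xs \<in> tuples A n)"
  by (cases ws) (auto simp: tuples_def)

lemma tuples_2: "ws \<in> tuples A 2 \<longleftrightarrow> (\<exists>x y. ws = [x, y] \<and> x \<in> lists A \<and> y \<in> lists A)"
  by (auto simp: numeral_2_eq_2 tuples_def length_Suc_conv)

lemma weakly_regular_subset_tuples: "weakly_regular A n L \<Longrightarrow> L \<subseteq> tuples A n"
  by (auto simp: weakly_regular_def)

lemma weakly_regularI:
  assumes "finite Q" "I \<subseteq> Q" "F \<subseteq> Q" "T \<subseteq> Q \<times> ({None, Some None} \<union> Some ` Some ` A) \<times> Q"
    and "\<forall>q\<in>Q. tape q < n" "L = {ws \<in> tuples A n. wr_accepts I T tape F ws}"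
  shows "weakly_regular A n L"
  unfolding weakly_regular_def
  by (rule exI[of _ Q], rule exI[of _ I], rule exI[of _ F], rule exI[of _ T], rule exI[of _ tape])
    (use assms in blast)

lemma weakly_regularE:
  assumes "weakly_regular A n L"
  obtains Q I F T tape where "finite Q" "I \<subseteq> Q" "F \<subseteq> Q"
    "T \<subseteq> Q \<times> ({None, Some None} \<union> Some ` Some ` A) \<times> Q" "\<forall>q\<in>Q. tape q < n"
    "L = {ws \<in> tuples A n. wr_accepts I T tape F ws}"
  using assms unfolding weakly_regular_def by blast

lemma add_end_eq_iff [simp]: "add_end x = add_end y \<longleftrightarrow> x = y"
  by (auto simp: add_end_def)

lemma add_end_simps [simp]: "add_end [] = [None]" "add_end (a # w) = Some a # add_end w"
  by (simp_all add: add_end_def)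

lemma add_end_append: "map Some u @ add_end w = add_end (u @ w)"
  by (simp add: add_end_def)

lemma append_eq_add_end:
  "xs @ ys = add_end w \<Longrightarrow>
   (\<exists>w1 w2. w = w1 @ w2 \<and> xs = map Some w1 \<and> ys = add_end w2) \<or> (xs = add_end w \<and> ys = [])"
proof (induction xs arbitrary: w)
  case (Cons x xs)
  show ?case
  proof (cases w)
    case (Cons c w')
    then have "x = Some c" "xs @ ys = add_end w'"
      using Cons.prems by auto
    with Cons.IH[of w'] \<open>w = c # w'\<close> show ?thesis
      by (metis add_end_simps(2) append_Cons list.simps(9))
  qed (use Cons.prems in auto)
qed simp

lemma add_end_splice:
  assumes "xs @ ys = add_end w" "xs' @ ys' = add_end w'" "None \<in> set xs \<longleftrightarrow> None \<in> set xs'"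
  shows "\<exists>w''. xs @ ys' = add_end w'' \<and> set w'' \<subseteq> set w \<union> set w'"
proof (cases "None \<in> set xs")
  case True
  then show ?thesis using assms append_eq_add_end[OF assms(1)] append_eq_add_end[OF assms(2)]
    by (auto simp: add_end_def)
next
  case False
  then obtain w1 w2 w3 w4 where "w = w1 @ w2" "xs = map Some w1" "w' = w3 @ w4" "ys' = add_end w4"
    using assms append_eq_add_end[OF assms(1)] append_eq_add_end[OF assms(2)]
    by (auto simp: add_end_def)
  then show ?thesis
    by (intro exI[of _ "w1 @ w4"]) (auto simp: add_end_append)
qed

lemma wr_run_embed:
  assumes T: "\<And>p c q'. (f p, c, q') \<in> T \<longleftrightarrow> (\<exists>q. q' = f q \<and> (p, c, q) \<in> T0)"
    and tape: "\<And>p. tape (f p) = tape0 p"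
    and F: "\<And>p. f p \<in> F \<longleftrightarrow> p \<in> F0"
  shows "wr_run T tape F (f p) rs \<longleftrightarrow> wr_run T0 tape0 F0 p rs"
proof
  show "wr_run T tape F (f p) rs \<Longrightarrow> wr_run T0 tape0 F0 p rs"
  proof (induction "f p" rs arbitrary: p rule: wr_run.induct)
    case (fin rs)
    then show ?case using F by (blast intro: wr_run.fin)
  next
    case (eps q' rs)
    then show ?case using T by (metis wr_run.eps)
  next
    case (step c q' rs r)
    then show ?case using T tape by (metis wr_run.step)
  qed
  show "wr_run T0 tape0 F0 p rs \<Longrightarrow> wr_run T tape F (f p) rs"
  proof (induction rule: wr_run.induct)
    case (fin q rs)
    then show ?case using F by (blast intro: wr_run.fin)
  next
    case (eps q q' rs)
    then show ?case using T by (blast intro: wr_run.eps)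
  next
    case (step q c q' rs r)
    then show ?case using T tape by (metis wr_run.step)
  qed
qed

lemma wr_run_Cons_tape:
  "wr_run T (\<lambda>q. Suc (tape q)) F q (r0 # rs) \<longleftrightarrow> r0 = [] \<and> wr_run T tape F q rs"
proof
  show "wr_run T (\<lambda>q. Suc (tape q)) F q (r0 # rs) \<Longrightarrow> r0 = [] \<and> wr_run T tape F q rs"
  proof (induction q "r0 # rs" arbitrary: r0 rs rule: wr_run.induct)
    case (fin q)
    then show ?case by (simp add: wr_run.fin)
  next
    case (eps q q')
    then show ?case by (blast intro: wr_run.eps)
  next
    case (step q c q' r)
    then show ?case by (auto intro: wr_run.step)
  qed
  have "wr_run T tape F q rs \<Longrightarrow> wr_run T (\<lambda>q. Suc (tape q)) F q ([] # rs)"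
  proof (induction rule: wr_run.induct)
    case (fin q rs)
    then show ?case by (simp add: wr_run.fin)
  next
    case (eps q q' rs)
    then show ?case by (blast intro: wr_run.eps)
  next
    case (step q c q' rs r)
    then show ?case by (auto intro: wr_run.step)
  qed
  then show "r0 = [] \<and> wr_run T tape F q rs \<Longrightarrow> wr_run T (\<lambda>q. Suc (tape q)) F q (r0 # rs)"
    by blast
qed

section \<open>Union\<close>

lemma weakly_regular_Un:
  assumes "weakly_regular A n P" "weakly_regular A n P'"
  shows "weakly_regular A n (P \<union> P')"
proof -
  obtain Q1 I1 F1 T1 t1 where H1: "finite Q1" "I1 \<subseteq> Q1" "F1 \<subseteq> Q1"
    "T1 \<subseteq> Q1 \<times> ({None, Some None} \<union> Some ` Some ` A) \<times> Q1" "\<forall>q\<in>Q1. t1 q < n"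
    "P = {ws \<in> tuples A n. wr_accepts I1 T1 t1 F1 ws}"
    using assms(1) by (rule weakly_regularE)
  obtain Q2 I2 F2 T2 t2 where H2: "finite Q2" "I2 \<subseteq> Q2" "F2 \<subseteq> Q2"
    "T2 \<subseteq> Q2 \<times> ({None, Some None} \<union> Some ` Some ` A) \<times> Q2" "\<forall>q\<in>Q2. t2 q < n"
    "P' = {ws \<in> tuples A n. wr_accepts I2 T2 t2 F2 ws}"
    using assms(2) by (rule weakly_regularE)
  define T where "T = {(2*p, c, 2*q) | p c q. (p, c, q) \<in> T1} \<union> {(2*p+1, c, 2*q+1) | p c q. (p, c, q) \<in> T2}"
  define tape where "tape k = (if even k then t1 (k div 2) else t2 (k div 2))" for k :: nat
  define F where "F = (\<lambda>q. 2*q) ` F1 \<union> (\<lambda>q. 2*q+1) ` F2"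
  define I where "I = (\<lambda>q. 2*q) ` I1 \<union> (\<lambda>q. 2*q+1) ` I2"
  have E1: "wr_run T tape F (2*p) rs \<longleftrightarrow> wr_run T1 t1 F1 p rs" for p rs
    by (rule wr_run_embed) (auto simp: T_def tape_def F_def; presburger)+
  have E2: "wr_run T tape F (2*p+1) rs \<longleftrightarrow> wr_run T2 t2 F2 p rs" for p rs
    by (rule wr_run_embed) (auto simp: T_def tape_def F_def; presburger)+
  have "wr_accepts I T tape F ws \<longleftrightarrow> wr_accepts I1 T1 t1 F1 ws \<or> wr_accepts I2 T2 t2 F2 ws" for ws
    unfolding wr_accepts_def I_def using E1 E2 by blast
  then show ?thesis
    using H1 H2
    by (intro weakly_regularI[where Q = "(\<lambda>q. 2*q) ` Q1 \<union> (\<lambda>q. 2*q+1) ` Q2" and I = I and F = F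
          and T = T and tape = tape]) (auto simp: I_def F_def T_def tape_def)
qed

section \<open>Existential projection\<close>

text \<open>Moves on tape 0 become \<open>\<epsilon>\<close>-moves; state \<open>2 * p\<close> simulates \<open>p\<close> before and \<open>Suc (2 * p)\<close>
  after the end marker of tape 0 has been guessed.\<close>

definition proj_trans ::
  "(nat \<times> 'a option option \<times> nat) set \<Rightarrow> (nat \<Rightarrow> nat) \<Rightarrow> (nat \<times> 'a option option \<times> nat) set" where
  "proj_trans T tape =
     {(2 * p + b, None, 2 * q + b) | p q b. (p, None, q) \<in> T \<and> b \<le> 1}
   \<union> {(2 * p + b, Some c, 2 * q + b) | p c q b. (p, Some c, q) \<in> T \<and> tape p \<noteq> 0 \<and> b \<le> 1}
   \<union> {(2 * p, None, 2 * q) | p a q. (p, Some (Some a), q) \<in> T \<and> tape p = 0}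
   \<union> {(2 * p, None, Suc (2 * q)) | p q. (p, Some None, q) \<in> T \<and> tape p = 0}"

definition proj_tape :: "(nat \<Rightarrow> nat) \<Rightarrow> nat \<Rightarrow> nat" where
  "proj_tape tape k = tape (k div 2) - 1"

context
  fixes T :: "(nat \<times> 'a option option \<times> nat) set" and tape :: "nat \<Rightarrow> nat" and F :: "nat set"
begin

abbreviation proj_run :: "nat \<Rightarrow> 'a option list list \<Rightarrow> bool" where
  "proj_run \<equiv> wr_run (proj_trans T tape) (proj_tape tape) ((\<lambda>q. Suc (2 * q)) ` F)"

lemma wr_run_proj_sound_eps:
  assumes T: "T \<subseteq> UNIV \<times> ({None, Some None} \<union> Some ` Some ` A) \<times> UNIV"
    and "(k, None, k') \<in> proj_trans T tape"
    and IH: "if odd k' then r0 = [] else r0 \<in> add_end ` lists A" "wr_run T tape F (k' div 2) (r0 # rs)"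
  shows "\<exists>r0. (if odd k then r0 = [] else r0 \<in> add_end ` lists A) \<and> wr_run T tape F (k div 2) (r0 # rs)"
proof -
  from assms(2) consider
      (eps) p q b where "k = 2 * p + b" "k' = 2 * q + b" "(p, None, q) \<in> T" "b \<le> 1"
    | (letter) p a q where "k = 2 * p" "k' = 2 * q" "(p, Some (Some a), q) \<in> T" "tape p = 0"
    | (marker) p q where "k = 2 * p" "k' = Suc (2 * q)" "(p, Some None, q) \<in> T" "tape p = 0"
    unfolding proj_trans_def by blast
  then show ?thesis
  proof cases
    case eps
    then show ?thesis
      using IH by (intro exI[of _ r0]) (auto intro: wr_run.eps)
  next
    case letter
    then obtain x where "r0 = add_end x" "x \<in> lists A" "a \<in> A"
      using IH T by auto
    moreover from this have "add_end (a # x) \<in> add_end ` lists A"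
      by (intro imageI) simp
    moreover have "wr_run T tape F p (add_end (a # x) # rs)"
      by (rule wr_run.step[OF letter(3)]) (use letter IH \<open>r0 = add_end x\<close> in simp_all)
    ultimately show ?thesis
      using letter by (intro exI[of _ "add_end (a # x)"]) (simp del: add_end_simps)
  next
    case marker
    have "add_end [] \<in> add_end ` lists A"
      by (intro imageI) simp
    moreover have "wr_run T tape F p (add_end [] # rs)"
      by (rule wr_run.step[OF marker(3)]) (use marker IH in simp_all)
    ultimately show ?thesis
      using marker by (intro exI[of _ "add_end []"]) (simp del: add_end_simps)
  qed
qed

lemma wr_run_proj_sound:
  assumes T: "T \<subseteq> UNIV \<times> ({None, Some None} \<union> Some ` Some ` A) \<times> UNIV"
  shows "proj_run k rs \<Longrightarrow> \<exists>r0. (if odd k then r0 = [] else r0 \<in> add_end ` lists A) \<and> wr_run T tape F (k div 2) (r0 # rs)"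
proof (induction rule: wr_run.induct)
  case (fin k rs)
  then show ?case
    by (auto intro!: wr_run.fin)
next
  case (eps k k' rs)
  then show ?case
    using wr_run_proj_sound_eps[OF T] by blast
next
  case (step k c k' rs r)
  from step.hyps(1) obtain p q b where pq: "k = 2 * p + b" "k' = 2 * q + b" "(p, Some c, q) \<in> T"
    "tape p \<noteq> 0" "b \<le> 1"
    unfolding proj_trans_def by blast
  obtain j where j: "tape p = Suc j"
    using pq(4) not0_implies_Suc by blast
  then have "proj_tape tape k = j"
    using pq(1,5) by (simp add: proj_tape_def)
  then obtain r0 where IH: "if odd k' then r0 = [] else r0 \<in> add_end ` lists A"
    "wr_run T tape F q (r0 # rs[j := r])"
    using step.IH pq(1,2,5) by auto
  have "wr_run T tape F p (r0 # rs)"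
    by (rule wr_run.step[OF pq(3)]) (use step.hyps(2,3) j \<open>proj_tape tape k = j\<close> IH(2) in simp_all)
  then show ?case
    using IH(1) pq by (intro exI[of _ r0]) auto
qed

lemma proj_trans_intros:
  "(p, None, q) \<in> T \<Longrightarrow> (2 * p, None, 2 * q) \<in> proj_trans T tape"
  "(p, None, q) \<in> T \<Longrightarrow> (Suc (2 * p), None, Suc (2 * q)) \<in> proj_trans T tape"
  "(p, Some c, q) \<in> T \<Longrightarrow> tape p \<noteq> 0 \<Longrightarrow> (2 * p, Some c, 2 * q) \<in> proj_trans T tape"
  "(p, Some c, q) \<in> T \<Longrightarrow> tape p \<noteq> 0 \<Longrightarrow> (Suc (2 * p), Some c, Suc (2 * q)) \<in> proj_trans T tape"
  "(p, Some (Some a), q) \<in> T \<Longrightarrow> tape p = 0 \<Longrightarrow> (2 * p, None, 2 * q) \<in> proj_trans T tape"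
  "(p, Some None, q) \<in> T \<Longrightarrow> tape p = 0 \<Longrightarrow> (2 * p, None, Suc (2 * q)) \<in> proj_trans T tape"
  unfolding proj_trans_def by (fastforce intro: exI[of _ 0] exI[of _ 1])+

lemma wr_run_proj_complete:
  "wr_run T tape F p (r0 # rs) \<Longrightarrow>
    (r0 = [] \<longrightarrow> proj_run (Suc (2 * p)) rs) \<and> (r0 \<in> range add_end \<longrightarrow> proj_run (2 * p) rs)"
proof (induction p "r0 # rs" arbitrary: r0 rs rule: wr_run.induct)
  case (fin p)
  then show ?case
    by (auto intro: wr_run.fin simp: add_end_def)
next
  case (eps p p')
  then show ?case
    by (blast intro: wr_run.eps proj_trans_intros)
next
  case (step p c p' r)
  show ?case
  proof (cases "tape p")
    case 0
    then have "r0 = c # r" and IH: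
      "r = [] \<longrightarrow> proj_run (Suc (2 * p')) rs"
      "r \<in> range add_end \<longrightarrow> proj_run (2 * p') rs"
      using step by simp_all
    show ?thesis
    proof (intro conjI impI)
      assume "r0 \<in> range add_end"
      then obtain x where "c # r = add_end x"
        using \<open>r0 = c # r\<close> by auto
      then consider "c = None" "r = []" | a x' where "c = Some a" "r = add_end x'"
        by (cases x) auto
      then show "proj_run (2 * p) rs"
        by cases (use IH step.hyps(1) 0 in \<open>auto intro: wr_run.eps proj_trans_intros\<close>)
    qed (use \<open>r0 = c # r\<close> in simp)
  next
    case (Suc j)
        have "(r0 # rs)[tape p := r] = r0 # rs[j := r]"
      using Suc by simp
    then have IH: "r0 = [] \<longrightarrow> proj_run (Suc (2 * p')) (rs[j := r])"
      "r0 \<in> range add_end \<longrightarrow> proj_run (2 * p') (rs[j := r])"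
      using step.hyps(5) by simp_all
    have tape: "proj_tape tape (2 * p) = j" "proj_tape tape (Suc (2 * p)) = j"
      using Suc by (simp_all add: proj_tape_def)
    have "j < length rs" "rs ! j = c # r"
      using step.hyps(2,3) Suc by simp_all
    then have "proj_run (Suc (2 * p)) rs" if "proj_run (Suc (2 * p')) (rs[j := r])"
      using wr_run.step[OF proj_trans_intros(4)[OF step.hyps(1)]] that tape Suc by simp
    moreover have "proj_run (2 * p) rs" if "proj_run (2 * p') (rs[j := r])"
      using wr_run.step[OF proj_trans_intros(3)[OF step.hyps(1)]] that tape Suc
      \<open>j < length rs\<close> \<open>rs ! j = c # r\<close> by simp
    ultimately show ?thesis
      using IH by blast
  qed
qed

lemma proj_trans_language:
  assumes T: "T \<subseteq> UNIV \<times> ({None, Some None} \<union> Some ` Some ` A) \<times> UNIV"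
  shows "{xs. \<exists>x \<in> lists A. x # xs \<in> {ws \<in> tuples A (Suc m). wr_accepts I T tape F ws}}
    = {xs \<in> tuples A m.
        wr_accepts ((\<lambda>q. 2 * q) ` I) (proj_trans T tape) (proj_tape tape) ((\<lambda>q. Suc (2 * q)) ` F) xs}"
    (is "?L = ?R")
proof (intro set_eqI iffI)
  fix xs assume "xs \<in> ?L"
  then show "xs \<in> ?R"
    using wr_run_proj_complete unfolding wr_accepts_def by fastforce
next
  fix xs assume "xs \<in> ?R"
  then obtain q x where "xs \<in> tuples A m" "q \<in> I" "x \<in> lists A"
    "wr_run T tape F q (add_end x # map add_end xs)"
    using wr_run_proj_sound[OF T] unfolding wr_accepts_def by fastforce
  then show "xs \<in> ?L"
    unfolding wr_accepts_def by auto
qed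

end

lemma finite_div_2_preimage: "finite Q \<Longrightarrow> finite {k :: nat. k div 2 \<in> Q}"
proof -
  have "{k. k div 2 \<in> Q} \<subseteq> (\<lambda>(p, b). 2 * p + b) ` (Q \<times> {0, 1})"
  proof
    fix k assume "k \<in> {k. k div 2 \<in> Q}"
    then show "k \<in> (\<lambda>(p, b). 2 * p + b) ` (Q \<times> {0, 1})"
      by (intro image_eqI[of _ _ "(k div 2, k mod 2)"]) auto
  qed
  then show "finite Q \<Longrightarrow> ?thesis"
    by (rule finite_subset) simp
qed

lemma weakly_regular_proj:
  assumes "2 \<le> n" "weakly_regular A n P"
  shows "weakly_regular A (n - 1) {xs. \<exists>x \<in> lists A. x # xs \<in> P}"
proof -
  obtain Q I F T tape where "finite Q" "I \<subseteq> Q" "F \<subseteq> Q"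
    and T: "T \<subseteq> Q \<times> ({None, Some None} \<union> Some ` Some ` A) \<times> Q"
    and tape: "\<forall>q\<in>Q. tape q < n"
    and P: "P = {ws \<in> tuples A n. wr_accepts I T tape F ws}"
    using assms(2) by (rule weakly_regularE)
  obtain m where n: "n = Suc m"
    using assms(1) not0_implies_Suc by fastforce
  let ?Q = "{k. k div 2 \<in> Q}"
  show ?thesis
  proof (rule weakly_regularI)
    show "finite ?Q"
      using \<open>finite Q\<close> by (rule finite_div_2_preimage)
    show "(\<lambda>q. 2 * q) ` I \<subseteq> ?Q" "(\<lambda>q. Suc (2 * q)) ` F \<subseteq> ?Q"
      using \<open>I \<subseteq> Q\<close> \<open>F \<subseteq> Q\<close> by auto
    show "proj_trans T tape \<subseteq> ?Q \<times> ({None, Some None} \<union> Some ` Some ` A) \<times> ?Q"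
      unfolding proj_trans_def using T by auto
    show "\<forall>q\<in>?Q. proj_tape tape q < n - 1"
      using tape assms(1) by (fastforce simp: proj_tape_def)
    show "{xs. \<exists>x \<in> lists A. x # xs \<in> P} = {xs \<in> tuples A (n - 1).
      wr_accepts ((\<lambda>q. 2 * q) ` I) (proj_trans T tape) (proj_tape tape) ((\<lambda>q. Suc (2 * q)) ` F) xs}"
      using proj_trans_language[of T A m I tape F] T unfolding P n by auto
  qed
qed

section \<open>Prefixing a tape that must be empty or non-empty\<close>

text \<open>States 0 and 1 read tape 0 and check whether it holds the empty word (\<open>e\<close>) or a non-empty
  one; then the given automaton, renumbered from state 2 on, runs on the other tapes.\<close>

definition guard_trans ::
  "bool \<Rightarrow> 'a set \<Rightarrow> nat set \<Rightarrow> (nat \<times> 'a option option \<times> nat) set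
   \<Rightarrow> (nat \<times> 'a option option \<times> nat) set" where
  "guard_trans e A I T =
     {(0, Some None, Suc (Suc q)) | q. e \<and> q \<in> I} \<union> {(0, Some (Some a), Suc 0) | a. \<not> e \<and> a \<in> A}
     \<union> {(Suc 0, Some (Some a), Suc 0) | a. a \<in> A} \<union> {(Suc 0, Some None, Suc (Suc q)) | q. q \<in> I}
     \<union> {(Suc (Suc p), c, Suc (Suc q)) | p c q. (p, c, q) \<in> T}"

definition guard_tape :: "(nat \<Rightarrow> nat) \<Rightarrow> nat \<Rightarrow> nat" where
  "guard_tape tape q = (case q of Suc (Suc p) \<Rightarrow> Suc (tape p) | _ \<Rightarrow> 0)"

context
  fixes e :: bool and A :: "'a set" and I :: "nat set"
    and T :: "(nat \<times> 'a option option \<times> nat) set" and tape :: "nat \<Rightarrow> nat" and F :: "nat set"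
begin

abbreviation guard_run :: "nat \<Rightarrow> 'a option list list \<Rightarrow> bool" where
  "guard_run \<equiv> wr_run (guard_trans e A I T) (guard_tape tape) (Suc ` Suc ` F)"

lemma guard_trans_from_0:
  "(0, c, q') \<in> guard_trans e A I T \<longleftrightarrow>
     e \<and> c = Some None \<and> (\<exists>q\<in>I. q' = Suc (Suc q)) \<or> \<not> e \<and> (\<exists>a\<in>A. c = Some (Some a)) \<and> q' = Suc 0"
  by (auto simp: guard_trans_def)

lemma guard_trans_from_1:
  "(Suc 0, c, q') \<in> guard_trans e A I T \<longleftrightarrow>
     (\<exists>a\<in>A. c = Some (Some a)) \<and> q' = Suc 0 \<or> c = Some None \<and> (\<exists>q\<in>I. q' = Suc (Suc q))"
  by (auto simp: guard_trans_def)

lemma guard_trans_shift: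
  "(Suc (Suc p), c, q') \<in> guard_trans e A I T \<longleftrightarrow> (\<exists>q. q' = Suc (Suc q) \<and> (p, c, q) \<in> T)"
  by (auto simp: guard_trans_def)

lemma guard_tape_simps [simp]:
  "guard_tape tape 0 = 0" "guard_tape tape (Suc 0) = 0" "guard_tape tape (Suc (Suc q)) = Suc (tape q)"
  by (simp_all add: guard_tape_def)

lemma guard_run_shift: "guard_run (Suc (Suc q)) (r0 # rs) \<longleftrightarrow> r0 = [] \<and> wr_run T tape F q rs"
proof -
  have "guard_run (Suc (Suc q)) rs' \<longleftrightarrow> wr_run T (\<lambda>q. Suc (tape q)) F q rs'" for rs'
    by (rule wr_run_embed) (auto simp: guard_trans_shift)
  then show ?thesis
    by (simp add: wr_run_Cons_tape)
qed

lemma guard_run_skip: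
  "z \<in> lists A \<Longrightarrow> guard_run (Suc 0) (add_end z # rs) \<longleftrightarrow> (\<exists>q\<in>I. wr_run T tape F q rs)"
proof (induction z)
  case Nil
  show ?case
  proof
    assume "guard_run (Suc 0) (add_end [] # rs)"
    then show "\<exists>q\<in>I. wr_run T tape F q rs"
    proof cases
      case (step c q' r)
      then obtain q where "q \<in> I" "q' = Suc (Suc q)" "r = []"
        by (auto simp: guard_trans_from_1)
      then show ?thesis
        using step(4) by (auto simp: guard_run_shift)
    qed (auto simp: guard_trans_from_1)
  next
    assume "\<exists>q\<in>I. wr_run T tape F q rs"
    then obtain q where "q \<in> I" "guard_run (Suc (Suc q)) ([] # rs)"
      by (auto simp: guard_run_shift)
    then show "guard_run (Suc 0) (add_end [] # rs)"
      by - (rule wr_run.step[where c = None and q' = "Suc (Suc q)"], simp_all add: guard_trans_from_1)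
  qed
next
  case (Cons a z)
  show ?case
  proof
    assume "guard_run (Suc 0) (add_end (a # z) # rs)"
    then show "\<exists>q\<in>I. wr_run T tape F q rs"
    proof cases
      case (step c q' r)
      then show ?thesis
        using Cons by (auto simp: guard_trans_from_1)
    qed (auto simp: guard_trans_from_1)
  next
    assume "\<exists>q\<in>I. wr_run T tape F q rs"
    then show "guard_run (Suc 0) (add_end (a # z) # rs)"
      using Cons by - (rule wr_run.step[where c = "Some a" and q' = "Suc 0"],
            simp_all add: guard_trans_from_1)
  qed
qed

lemma guard_run_start_Nil: "guard_run 0 (add_end [] # rs) \<longleftrightarrow> e \<and> (\<exists>q\<in>I. wr_run T tape F q rs)"
proof
  assume "guard_run 0 (add_end [] # rs)"
  then show "e \<and> (\<exists>q\<in>I. wr_run T tape F q rs)"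
  proof cases
    case (step c q' r)
    then obtain q where "e" "q \<in> I" "q' = Suc (Suc q)" "r = []"
      by (auto simp: guard_trans_from_0)
    moreover from this(3,4) have "wr_run T tape F q rs"
      using step(4) by (simp add: guard_run_shift)
    ultimately show ?thesis
      by blast
  qed (auto simp: guard_trans_from_0)
next
  assume "e \<and> (\<exists>q\<in>I. wr_run T tape F q rs)"
  then obtain q where "e" "q \<in> I" "wr_run T tape F q rs"
    by blast
  have "(0, Some None, Suc (Suc q)) \<in> guard_trans e A I T"
    using \<open>e\<close> \<open>q \<in> I\<close> unfolding guard_trans_from_0 by blast
  moreover have "guard_run (Suc (Suc q)) ([] # rs)"
    using \<open>wr_run T tape F q rs\<close> by (simp add: guard_run_shift)
  ultimately show "guard_run 0 (add_end [] # rs)"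
    by - (rule wr_run.step, simp_all)
qed

lemma guard_run_start_Cons:
  assumes "a \<in> A" "z \<in> lists A"
  shows "guard_run 0 (add_end (a # z) # rs) \<longleftrightarrow> \<not> e \<and> (\<exists>q\<in>I. wr_run T tape F q rs)"
proof
  assume "guard_run 0 (add_end (a # z) # rs)"
  then show "\<not> e \<and> (\<exists>q\<in>I. wr_run T tape F q rs)"
  proof cases
    case (step c q' r)
    then show ?thesis
      using guard_run_skip[OF assms(2)] by (auto simp: guard_trans_from_0)
  qed (auto simp: guard_trans_from_0)
next
  assume "\<not> e \<and> (\<exists>q\<in>I. wr_run T tape F q rs)"
  then have "(0, Some (Some a), Suc 0) \<in> guard_trans e A I T"
    and "guard_run (Suc 0) (add_end z # rs)"
    using guard_run_skip[OF assms(2)] assms(1) unfolding guard_trans_from_0 by blast+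
  then show "guard_run 0 (add_end (a # z) # rs)"
    by - (rule wr_run.step, simp_all)
qed

lemma guard_run_start:
  "z \<in> lists A \<Longrightarrow> guard_run 0 (add_end z # rs) \<longleftrightarrow> (z = []) = e \<and> (\<exists>q\<in>I. wr_run T tape F q rs)"
  by (cases z) (simp_all add: guard_run_start_Nil guard_run_start_Cons del: add_end_simps)

end

definition guarded_Cons :: "'a set \<Rightarrow> bool \<Rightarrow> 'a list list set \<Rightarrow> 'a list list set" where
  "guarded_Cons A e L = {z # ws | z ws. z \<in> lists A \<and> (z = []) = e \<and> ws \<in> L}"

lemma weakly_regular_guarded_Cons:
  assumes "weakly_regular A n L"
  shows "weakly_regular A (Suc n) (guarded_Cons A e L)"
proof -
  obtain Q I F T tape where "finite Q" "I \<subseteq> Q" "F \<subseteq> Q"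
    and T: "T \<subseteq> Q \<times> ({None, Some None} \<union> Some ` Some ` A) \<times> Q" and "\<forall>q\<in>Q. tape q < n"
    and L: "L = {ws \<in> tuples A n. wr_accepts I T tape F ws}"
    using assms by (rule weakly_regularE)
  let ?Q = "{0, Suc 0} \<union> Suc ` Suc ` Q"
  let ?accepts = "wr_accepts {0} (guard_trans e A I T) (guard_tape tape) (Suc ` Suc ` F)"
  have acc: "?accepts (z # ws) \<longleftrightarrow> (z = []) = e \<and> ws \<in> L"
    if "z \<in> lists A" "ws \<in> tuples A n" for z ws
    using guard_run_start[OF that(1), of e I T tape F "map add_end ws"] that(2)
    by (simp add: L wr_accepts_def)
  show ?thesis
  proof (rule weakly_regularI)
    show "finite ?Q" "{0} \<subseteq> ?Q" "Suc ` Suc ` F \<subseteq> ?Q"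
      using \<open>finite Q\<close> \<open>F \<subseteq> Q\<close> by auto
    show "guard_trans e A I T \<subseteq> ?Q \<times> ({None, Some None} \<union> Some ` Some ` A) \<times> ?Q"
      using T \<open>I \<subseteq> Q\<close> unfolding guard_trans_def by fast
    show "\<forall>q\<in>?Q. guard_tape tape q < Suc n"
      using \<open>\<forall>q\<in>Q. tape q < n\<close> by auto
    show "guarded_Cons A e L = {ws \<in> tuples A (Suc n). ?accepts ws}"
    proof (intro set_eqI iffI)
      fix ws assume "ws \<in> guarded_Cons A e L"
      then show "ws \<in> {ws \<in> tuples A (Suc n). ?accepts ws}"
        using acc unfolding guarded_Cons_def L by auto
    next
      fix ws assume "ws \<in> {ws \<in> tuples A (Suc n). ?accepts ws}"
      then obtain z ws' where "ws = z # ws'" "z \<in> lists A" "ws' \<in> tuples A n" "?accepts (z # ws')"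
        unfolding tuples_Suc by blast
      then show "ws \<in> guarded_Cons A e L"
        using acc unfolding guarded_Cons_def by blast
    qed
  qed
qed

section \<open>Counting automaton\<close>

definition count_eq :: "'a set \<Rightarrow> 'a \<Rightarrow> 'a list list set" where
  "count_eq A b = {[x, y] | x y. x \<in> lists A \<and> y \<in> lists A \<and> count_list x b = length y}"

text \<open>State 0 scans tape 0; each letter \<open>b\<close> sends it to state 1, which consumes one letter of
  tape 1. After the end marker of tape 0, states 2 and 3 check that tape 1 is exhausted too.\<close>

definition count_eq_trans :: "'a set \<Rightarrow> 'a \<Rightarrow> (nat \<times> 'a option option \<times> nat) set" where
  "count_eq_trans A b =
     {(0, Some (Some a), if a = b then 1 else 0) | a. a \<in> A} \<union> {(1, Some (Some a), 0) | a. a \<in> A}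
     \<union> {(0, Some None, 2), (2, Some None, 3)}"

definition count_eq_tape :: "nat \<Rightarrow> nat" where
  "count_eq_tape q = (if q = 0 then 0 else 1)"

definition count_eq_inv :: "'a \<Rightarrow> nat \<Rightarrow> 'a option list \<Rightarrow> 'a option list \<Rightarrow> bool" where
  "count_eq_inv b q r0 r1 \<longleftrightarrow>
     (q = 0 \<longrightarrow> (\<exists>x y. r0 = add_end x \<and> r1 = add_end y \<and> count_list x b = length y)) \<and>
     (q = 1 \<longrightarrow> (\<exists>x y. r0 = add_end x \<and> r1 = add_end y \<and> Suc (count_list x b) = length y)) \<and>
     (q = 2 \<longrightarrow> r0 = [] \<and> r1 = [None]) \<and> (q = 3 \<longrightarrow> r0 = [] \<and> r1 = [])"

lemma count_eq_inv_read:
  assumes "(q, Some c, q') \<in> count_eq_trans A b" "length rs = 2" "rs ! count_eq_tape q = c # r"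
    and IH: "count_eq_inv b q' ((rs[count_eq_tape q := r]) ! 0) ((rs[count_eq_tape q := r]) ! 1)"
  shows "count_eq_inv b q (rs ! 0) (rs ! 1)"
proof -
  from assms(1) consider
      (letter0) a where "q = 0" "c = Some a" "q' = (if a = b then 1 else 0)"
    | (letter1) a where "q = 1" "c = Some a" "q' = 0"
    | (end0) "q = 0" "c = None" "q' = 2"
    | (end1) "q = 2" "c = None" "q' = 3"
    by (auto simp: count_eq_trans_def)
  then show ?thesis
  proof cases
    case letter0
    then obtain x y where "r = add_end x" "rs ! 1 = add_end y"
      "(if a = b then Suc (count_list x b) else count_list x b) = length y"
      using IH assms(2) by (cases "a = b") (auto simp: count_eq_inv_def count_eq_tape_def)
    moreover have "rs ! 0 = add_end (a # x)"
      using assms(3) letter0 \<open>r = add_end x\<close> by (simp add: count_eq_tape_def)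
    ultimately show ?thesis
      using letter0 by (auto simp: count_eq_inv_def simp del: add_end_simps)
  next
    case letter1
    then obtain x y where "rs ! 0 = add_end x" "r = add_end y" "count_list x b = length y"
      using IH assms(2) by (auto simp: count_eq_inv_def count_eq_tape_def)
    moreover have "rs ! 1 = add_end (a # y)"
      using assms(3) letter1 \<open>r = add_end y\<close> by (simp add: count_eq_tape_def)
    ultimately show ?thesis
      using letter1 by (auto simp: count_eq_inv_def simp del: add_end_simps)
  next
    case end0
    then have "rs ! 0 = add_end []" "rs ! 1 = add_end []"
      using IH assms(2,3) by (auto simp: count_eq_inv_def count_eq_tape_def)
    then show ?thesis
      using end0 by (auto simp: count_eq_inv_def simp del: add_end_simps)
  next
    case end1
    then show ?thesis
      using IH assms(2,3) by (auto simp: count_eq_inv_def count_eq_tape_def)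
  qed
qed

lemma count_eq_inv_if_run:
  "wr_run (count_eq_trans A b) count_eq_tape {3} q rs \<Longrightarrow> length rs = 2
   \<Longrightarrow> count_eq_inv b q (rs ! 0) (rs ! 1)"
proof (induction rule: wr_run.induct)
  case (fin q rs)
  then show ?case
    by (auto simp: count_eq_inv_def numeral_2_eq_2)
next
  case (eps q q' rs)
  then show ?case
    by (simp add: count_eq_trans_def)
next
  case (step q c q' rs r)
  then show ?case
    using count_eq_inv_read[OF step.hyps(1) _ step.hyps(3)] by simp
qed

lemma count_eq_trans_intros:
  "a \<in> A \<Longrightarrow> (0, Some (Some a), if a = b then 1 else 0) \<in> count_eq_trans A b"
  "a \<in> A \<Longrightarrow> (1, Some (Some a), 0) \<in> count_eq_trans A b"
  "(0, Some None, 2) \<in> count_eq_trans A b" "(2, Some None, 3) \<in> count_eq_trans A b"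
  by (auto simp: count_eq_trans_def)

lemma count_eq_tape_simps [simp]:
  "count_eq_tape 0 = 0" "count_eq_tape (Suc q) = 1" "count_eq_tape (numeral k) = 1"
  by (simp_all add: count_eq_tape_def)

lemma count_eq_run_if_count:
  "x \<in> lists A \<Longrightarrow> y \<in> lists A \<Longrightarrow> count_list x b = length y
   \<Longrightarrow> wr_run (count_eq_trans A b) count_eq_tape {3} 0 [add_end x, add_end y]"
proof (induction x arbitrary: y)
  case Nil
  have "wr_run (count_eq_trans A b) count_eq_tape {3} 3 [[], []]"
    by (simp add: wr_run.fin)
  then have "wr_run (count_eq_trans A b) count_eq_tape {3} 2 [[], [None]]"
    by - (rule wr_run.step[OF count_eq_trans_intros(4)], simp_all)
  then show ?case
    using Nil by - (rule wr_run.step[OF count_eq_trans_intros(3)], simp_all)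
next
  case (Cons a x)
  show ?case
  proof (cases "a = b")
    case True
    then obtain d y' where "y = d # y'" "d \<in> A" "y' \<in> lists A" "count_list x b = length y'"
      using Cons.prems by (cases y) auto
    then have "wr_run (count_eq_trans A b) count_eq_tape {3} 1 [add_end x, add_end y]"
      using Cons.IH[of y'] Cons.prems
      by - (rule wr_run.step[OF count_eq_trans_intros(2)[of d]], simp_all)
    then show ?thesis
      using True Cons.prems count_eq_trans_intros(1)[of a A b]
      by - (rule wr_run.step[where c = "Some a" and q' = 1], simp_all)
  next
    case False
    then show ?thesis
      using Cons.IH[of y] Cons.prems count_eq_trans_intros(1)[of a A b]
      by - (rule wr_run.step[where c = "Some a" and q' = 0], simp_all)
  qed
qed

lemma weakly_regular_count_eq: "weakly_regular A 2 (count_eq A b)"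
proof (rule weakly_regularI)
  show "finite {0..3::nat}" "{0} \<subseteq> {0..3::nat}" "{3} \<subseteq> {0..3::nat}"
    by auto
  show "count_eq_trans A b \<subseteq> {0..3} \<times> ({None, Some None} \<union> Some ` Some ` A) \<times> {0..3}"
    by (auto simp: count_eq_trans_def)
  show "\<forall>q\<in>{0..3}. count_eq_tape q < 2"
    by (simp add: count_eq_tape_def)
  have "[x, y] \<in> count_eq A b \<longleftrightarrow> wr_accepts {0} (count_eq_trans A b) count_eq_tape {3} [x, y]"
    if "x \<in> lists A" "y \<in> lists A" for x y
  proof -
    have "[x, y] \<in> count_eq A b \<longleftrightarrow> count_list x b = length y"
      using that by (simp add: count_eq_def)
    also have "\<dots> \<longleftrightarrow> wr_accepts {0} (count_eq_trans A b) count_eq_tape {3} [x, y]"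
      using count_eq_run_if_count[OF that] count_eq_inv_if_run[of A b 0 "[add_end x, add_end y]"]
      by (auto simp: wr_accepts_def count_eq_inv_def)
    finally show ?thesis .
  qed
  then show "count_eq A b = {ws \<in> tuples A 2. wr_accepts {0} (count_eq_trans A b) count_eq_tape {3} ws}"
    by (auto simp: tuples_2 count_eq_def)
qed

section \<open>Cutting and splicing runs\<close>

lemma wr_run_step_update:
  "(q, Some c, q') \<in> T \<Longrightarrow> tape q < length rs \<Longrightarrow> wr_run T tape F q' (rs[tape q := r])
   \<Longrightarrow> wr_run T tape F q (rs[tape q := c # r])"
  by (rule wr_run.step) simp_all

inductive wr_path ::
  "(nat \<times> 'a option option \<times> nat) set \<Rightarrow> (nat \<Rightarrow> nat)
   \<Rightarrow> nat \<Rightarrow> 'a option list list \<Rightarrow> nat \<Rightarrow> bool"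
  for T tape where
  wr_path_refl: "\<forall>u\<in>set us. u = [] \<Longrightarrow> wr_path T tape p us p"
| wr_path_eps: "(p, None, p') \<in> T \<Longrightarrow> wr_path T tape p' us q \<Longrightarrow> wr_path T tape p us q"
| wr_path_step: "(p, Some c, p') \<in> T \<Longrightarrow> tape p < length us \<Longrightarrow> wr_path T tape p' us q
    \<Longrightarrow> wr_path T tape p (us[tape p := c # us ! tape p]) q"

lemma wr_path_in_states: "wr_path T tape p us q \<Longrightarrow> T \<subseteq> Q \<times> X \<times> Q \<Longrightarrow> p \<in> Q \<Longrightarrow> q \<in> Q"
  by (induction rule: wr_path.induct) auto

lemma map2_list_update:
  "length us = length rs \<Longrightarrow> k < length us \<Longrightarrow>
   map2 f (us[k := x]) rs = (map2 f us rs)[k := f x (rs ! k)]"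
  by (rule nth_equalityI) (auto simp: nth_list_update)

lemma wr_path_wr_run:
  assumes "wr_path T tape p us q" "wr_run T tape F q rs" "length us = length rs"
  shows "wr_run T tape F p (map2 (@) us rs)"
  using assms
proof (induction rule: wr_path.induct)
  case (wr_path_refl us p)
  have "map2 (@) us rs = rs"
    by (rule nth_equalityI) (use wr_path_refl in \<open>auto simp: set_conv_nth\<close>)
  then show ?case using wr_path_refl by simp
next
  case (wr_path_eps p p' us q)
  then show ?case by (blast intro: wr_run.eps)
next
  case (wr_path_step p c p' us q)
  let ?k = "tape p" and ?rs = "map2 (@) us rs"
  have len: "length us = length rs"
    using wr_path_step by simp
  have "?rs ! ?k = us ! ?k @ rs ! ?k"
    using wr_path_step len by simp
  moreover have "wr_run T tape F p' ?rs"
    using wr_path_step len by simp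
  ultimately have "wr_run T tape F p' (?rs[?k := us ! ?k @ rs ! ?k])"
    by (metis list_update_id)
  then have "wr_run T tape F p (?rs[?k := c # us ! ?k @ rs ! ?k])"
    using wr_run_step_update[OF wr_path_step(1)] wr_path_step len by simp
  then show ?case
    using map2_list_update[of us rs ?k "(@)"] wr_path_step len by simp
qed

lemma map2_append_replicate_Nil [simp]: "map2 (@) (replicate (length rs) []) rs = rs"
  by (induction rs) auto

lemma wr_path_step_map2:
  assumes "(q, Some c, q') \<in> T" "tape q < length rs" "rs ! tape q = c # r"
    and "wr_path T tape q' vs p" "length vs = length rs" "length rs' = length rs"
    and "rs[tape q := r] = map2 (@) vs rs'"
  shows "wr_path T tape q (vs[tape q := c # vs ! tape q]) p"
    and "rs = map2 (@) (vs[tape q := c # vs ! tape q]) rs'"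
proof -
  let ?k = "tape q"
  show "wr_path T tape q (vs[?k := c # vs ! ?k]) p"
    using wr_path_step[OF assms(1) _ assms(4)] assms(2,5) by simp
  have r: "r = vs ! ?k @ rs' ! ?k"
    using arg_cong[OF assms(7), of "\<lambda>xs. xs ! ?k"] assms(2,5,6) by simp
  have "rs = (rs[?k := r])[?k := c # r]"
    using assms(2,3) by (metis list_update_id list_update_overwrite)
  also have "\<dots> = map2 (@) (vs[?k := c # vs ! ?k]) rs'"
    using map2_list_update[of vs rs' ?k "(@)"] assms(2,5,6,7) r by simp
  finally show "rs = map2 (@) (vs[?k := c # vs ! ?k]) rs'" .
qed

lemma wr_run_split:
  assumes "wr_run T tape F p rs" "k < length rs" "rs ! k = u @ w"
  shows "\<exists>q vs rs'. wr_path T tape p vs q \<and> wr_run T tape F q rs'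
     \<and> length vs = length rs \<and> length rs' = length rs \<and> rs = map2 (@) vs rs' \<and> vs ! k = u"
  using assms
proof (induction arbitrary: u rule: wr_run.induct)
  case (fin q rs)
  then have "u = []"
    by (metis Nil_is_append_conv nth_mem)
  show ?case
    by (rule exI[of _ q], rule exI[of _ "replicate (length rs) []"], rule exI[of _ rs])
       (use fin \<open>u = []\<close> in \<open>simp add: wr_path_refl wr_run.fin\<close>)
next
  case (eps q q' rs)
  then show ?case by (meson wr_path_eps)
next
  case (step q c q' rs r)
  let ?k = "tape q"
  show ?case
  proof (cases "u = []")
    case True
    have "wr_run T tape F q rs"
      using step.hyps by (rule wr_run.step)
    show ?thesis
      by (rule exI[of _ q], rule exI[of _ "replicate (length rs) []"], rule exI[of _ rs])
         (use True step.prems \<open>wr_run T tape F q rs\<close> in \<open>simp add: wr_path_refl\<close>)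
  next
    case False
    define u' where "u' = (if ?k = k then tl u else u)"
    have "u = (if ?k = k then c # u' else u') \<and> (rs[?k := r]) ! k = u' @ w"
    proof (cases "?k = k")
      case True
      then have "c # r = u @ w"
        using step.hyps(3) step.prems(2) by simp
      moreover obtain a u'' where "u = a # u''"
        using \<open>u \<noteq> []\<close> by (meson neq_Nil_conv)
      ultimately have "u = c # tl u" "r = tl u @ w"
        by simp_all
      then show ?thesis
        using True step.hyps(2) by (simp add: u'_def)
    qed (use step.prems in \<open>simp add: u'_def\<close>)
    then have u: "u = (if ?k = k then c # u' else u')" and tail: "(rs[?k := r]) ! k = u' @ w"
      by simp_all
    from step.IH[OF _ tail] step.prems obtain p vs rs' where
      IH: "wr_path T tape q' vs p" "wr_run T tape F p rs'" "length vs = length rs"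
        "length rs' = length rs" "rs[?k := r] = map2 (@) vs rs'" "vs ! k = u'"
      by auto
    have "(vs[?k := c # vs ! ?k]) ! k = u"
      using IH(3,6) step.prems(1) u by (cases "?k = k") simp_all
    moreover have "length (vs[?k := c # vs ! ?k]) = length rs"
      using IH(3) by simp
    ultimately show ?thesis
      using wr_path_step_map2[OF step.hyps(1-3) IH(1,3,4,5)] IH(2,4) by blast
  qed
qed

text \<open>\<open>vs\<close> is what a run has read of each tape when it is cut, \<open>rs\<close> what remains.\<close>

definition cuts_encoding :: "'a set \<Rightarrow> nat \<Rightarrow> 'a option list list \<Rightarrow> 'a option list list \<Rightarrow> bool" where
  "cuts_encoding A n vs rs \<longleftrightarrow> length vs = n \<and> length rs = n \<and>
     (\<exists>ws\<in>tuples A n. map2 (@) vs rs = map add_end ws)"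

lemma map_add_end_if_nth:
  assumes "\<And>k. k < length rs \<Longrightarrow> \<exists>w. rs ! k = add_end w \<and> w \<in> lists A"
  shows "\<exists>ws\<in>tuples A (length rs). rs = map add_end ws"
  using assms
proof (induction rs)
  case (Cons r rs)
  obtain w where "r = add_end w" "w \<in> lists A"
    using Cons.prems[of 0] by auto
  moreover obtain ws where "ws \<in> tuples A (length rs)" "rs = map add_end ws"
    using Cons.IH Cons.prems by fastforce
  ultimately show ?case
    by (intro bexI[of _ "w # ws"]) simp_all
qed (simp add: tuples_def)

lemma cuts_encoding_nth:
  assumes "cuts_encoding A n vs rs" "k < n"
  shows "\<exists>w. vs ! k @ rs ! k = add_end w \<and> w \<in> lists A"
proof -
  obtain ws where ws: "ws \<in> tuples A n" "map2 (@) vs rs = map add_end ws"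
    using assms(1) by (auto simp: cuts_encoding_def)
  have "vs ! k @ rs ! k = map2 (@) vs rs ! k"
    using assms by (simp add: cuts_encoding_def)
  also have "\<dots> = add_end (ws ! k)"
    using ws assms(2) by (simp add: tuples_def)
  finally have "vs ! k @ rs ! k = add_end (ws ! k)" .
  moreover have "ws ! k \<in> lists A"
    using ws(1) assms(2) nth_mem unfolding tuples_def by blast
  ultimately show ?thesis
    by blast
qed

lemma cuts_encoding_splice:
  assumes "cuts_encoding A n vs rs" "cuts_encoding A n vs' rs'"
    and "map (\<lambda>v. None \<in> set v) vs = map (\<lambda>v. None \<in> set v) vs'"
  shows "cuts_encoding A n vs rs'"
proof -
  have "\<exists>w. map2 (@) vs rs' ! k = add_end w \<and> w \<in> lists A"
    if "k < length (map2 (@) vs rs')" for k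
  proof -
    have "k < n"
      using that assms(1) by (simp add: cuts_encoding_def)
    then obtain w1 w2 where "vs ! k @ rs ! k = add_end w1" "w1 \<in> lists A"
      and "vs' ! k @ rs' ! k = add_end w2" "w2 \<in> lists A"
      using cuts_encoding_nth assms(1,2) by metis
    moreover have "None \<in> set (vs ! k) \<longleftrightarrow> None \<in> set (vs' ! k)"
      using arg_cong[OF assms(3), of "\<lambda>xs. xs ! k"] \<open>k < n\<close> assms(1,2)
      by (simp add: cuts_encoding_def)
    ultimately obtain w where "vs ! k @ rs' ! k = add_end w" "set w \<subseteq> set w1 \<union> set w2"
      using add_end_splice by blast
    then show ?thesis
      using \<open>k < n\<close> \<open>w1 \<in> lists A\<close> \<open>w2 \<in> lists A\<close> assms(1,2)
      by (auto simp: cuts_encoding_def)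
  qed
  then show ?thesis
    using map_add_end_if_nth[of "map2 (@) vs rs'" A] assms(1,2)
    by (auto simp: cuts_encoding_def)
qed

lemma wr_run_splice:
  assumes "wr_path T tape p vs q" "cuts_encoding A n vs rs"
    and "wr_run T tape F q rs'" "cuts_encoding A n vs' rs'"
    and "map (\<lambda>v. None \<in> set v) vs = map (\<lambda>v. None \<in> set v) vs'"
  shows "\<exists>ws\<in>tuples A n. map2 (@) vs rs' = map add_end ws \<and> wr_run T tape F p (map add_end ws)"
proof -
  have "cuts_encoding A n vs rs'"
    using cuts_encoding_splice[OF assms(2,4,5)] .
  moreover have "wr_run T tape F p (map2 (@) vs rs')"
    using wr_path_wr_run[OF assms(1,3)] \<open>cuts_encoding A n vs rs'\<close> by (simp add: cuts_encoding_def)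
  ultimately show ?thesis
    unfolding cuts_encoding_def by auto
qed

lemma wr_accepts_cut:
  assumes "wr_accepts I T tape F ws" "ws \<in> tuples A n" "k < n" "ws ! k = u @ v"
  shows "\<exists>p q vs rs. p \<in> I \<and> wr_path T tape p vs q \<and> wr_run T tape F q rs
    \<and> cuts_encoding A n vs rs \<and> vs ! k = map Some u \<and> rs ! k = add_end v"
proof -
  obtain p where "p \<in> I" and run: "wr_run T tape F p (map add_end ws)"
    using assms(1) unfolding wr_accepts_def by blast
  have len: "length (map add_end ws) = n"
    using assms(2) by (simp add: tuples_def)
  have "map add_end ws ! k = map Some u @ add_end v"
    using assms(3,4) len by (simp add: add_end_append)
  from wr_run_split[OF run _ this] obtain q vs rs where split: "wr_path T tape p vs q"
    "wr_run T tape F q rs" "length vs = n" "length rs = n"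
    "map add_end ws = map2 (@) vs rs" "vs ! k = map Some u"
    using assms(3) len by auto
  have "rs ! k = add_end v"
    using arg_cong[OF split(5), of "\<lambda>xs. xs ! k"] split(3,4,6) assms(3,4) len
    by (simp add: add_end_append[symmetric])
  then show ?thesis
    using \<open>p \<in> I\<close> split assms(2) unfolding cuts_encoding_def by metis
qed

text \<open>A fooling-set argument: an accepting run on \<open>u i @ v i\<close> is cut when tape 0 has been read
  up to the end of \<open>u i\<close>. Only finitely many states and patterns of finished tapes occur at the
  cut, so the runs for some \<open>i \<noteq> j\<close> can be crossed over, accepting \<open>u i @ v j\<close>.\<close>

lemma not_weakly_regular_fooling:
  fixes u v :: "nat \<Rightarrow> 'a list"
  assumes accepted: "\<And>i. \<exists>ys. (u i @ v i) # ys \<in> L"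
    and fooled: "\<And>i j ys. (u i @ v j) # ys \<in> L \<Longrightarrow> i = j"
  shows "\<not> weakly_regular A n L"
proof
  assume "weakly_regular A n L"
  then obtain Q I F T tape where "finite Q" "I \<subseteq> Q"
    and T: "T \<subseteq> Q \<times> ({None, Some None} \<union> Some ` Some ` A) \<times> Q"
    and L: "L = {ws \<in> tuples A n. wr_accepts I T tape F ws}"
    unfolding weakly_regular_def by blast
  have "n \<noteq> 0"
    using accepted[of 0] L by (auto simp: tuples_def)
  define cut where "cut i p q vs rs \<longleftrightarrow> p \<in> I \<and> wr_path T tape p vs q \<and> wr_run T tape F q rs
      \<and> cuts_encoding A n vs rs \<and> vs ! 0 = map Some (u i) \<and> rs ! 0 = add_end (v i)" for i p q vs rs
  have "\<exists>p q vs rs. cut i p q vs rs" for i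
  proof -
    obtain ys where "(u i @ v i) # ys \<in> L"
      using accepted by blast
    then have "wr_accepts I T tape F ((u i @ v i) # ys)" "(u i @ v i) # ys \<in> tuples A n"
      unfolding L by auto
    from wr_accepts_cut[OF this, of 0 "u i" "v i"] \<open>n \<noteq> 0\<close> show ?thesis
      unfolding cut_def by simp
  qed
  then obtain p q vs rs where cut: "\<And>i. cut i (p i) (q i) (vs i) (rs i)"
    by metis
  define key where "key i = (q i, map (\<lambda>v. None \<in> set v) (vs i))" for i
  have "q i \<in> Q" "length (vs i) = n" for i
    using cut[of i] wr_path_in_states[OF _ T] \<open>I \<subseteq> Q\<close> by (auto simp: cut_def cuts_encoding_def)
  then have "range key \<subseteq> Q \<times> {bs. set bs \<subseteq> (UNIV :: bool set) \<and> length bs = n}"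
    by (auto simp: key_def)
  then have "finite (range key)"
    by (rule finite_subset) (use \<open>finite Q\<close> finite_lists_length_eq[of "UNIV :: bool set" n] in simp)
  then have "\<not> inj key"
    using finite_imageD infinite_UNIV_nat by blast
  then obtain i j where "i \<noteq> j" "key i = key j"
    unfolding inj_def by blast
  then obtain ws where ws: "ws \<in> tuples A n" "map2 (@) (vs i) (rs j) = map add_end ws"
    and "wr_run T tape F (p i) (map add_end ws)"
    using wr_run_splice[of T tape "p i" "vs i" "q j" A n "rs i" F "rs j" "vs j"] cut[of i] cut[of j]
    by (auto simp: key_def cut_def)
  then have "ws \<in> L"
    using cut[of i] unfolding L wr_accepts_def cut_def by auto
  moreover have "add_end (ws ! 0) = add_end (u i @ v j)"
    using arg_cong[OF ws(2), of "\<lambda>xs. xs ! 0"] cut[of i] cut[of j] \<open>n \<noteq> 0\<close> ws(1)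
    by (simp add: cut_def cuts_encoding_def tuples_def add_end_append)
  then have "ws = (u i @ v j) # tl ws"
    using ws(1) \<open>n \<noteq> 0\<close> by (cases ws) (auto simp: tuples_def)
  ultimately show False
    using fooled[of i j "tl ws"] \<open>i \<noteq> j\<close> by simp
qed

lemma count_list_replicate: "count_list (replicate n a) b = (if a = b then n else 0)"
  by (induction n) auto

lemma not_weakly_regular_count_eq_Int:
  assumes "a \<in> A" "b \<in> A" "a \<noteq> b"
  shows "\<not> weakly_regular A 2 (count_eq A a \<inter> count_eq A b)"
proof (rule not_weakly_regular_fooling[where u = "\<lambda>i. replicate i a" and v = "\<lambda>i. replicate i b"])
  show "\<exists>ys. (replicate i a @ replicate i b) # ys \<in> count_eq A a \<inter> count_eq A b" for i
    using assms by (intro exI[of _ "[replicate i a]"]) (auto simp: count_eq_def count_list_replicate)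
  show "i = j" if "(replicate i a @ replicate j b) # ys \<in> count_eq A a \<inter> count_eq A b" for i j ys
    using that assms by (auto simp: count_eq_def count_list_replicate)
qed

section \<open>The counterexamples\<close>

lemma weakly_regular_not_closed_Compl:
  assumes "weakly_regular A n P" "weakly_regular A n Q" "\<not> weakly_regular A n (P \<inter> Q)"
  shows "\<exists>R. weakly_regular A n R \<and> \<not> weakly_regular A n (tuples A n - R)"
proof (rule ccontr)
  assume "\<not> ?thesis"
  then have compl: "weakly_regular A n (tuples A n - R)" if "weakly_regular A n R" for R
    using that by blast
  have "P \<inter> Q = tuples A n - ((tuples A n - P) \<union> (tuples A n - Q))"
    using weakly_regular_subset_tuples[OF assms(1)] weakly_regular_subset_tuples[OF assms(2)] by blast
  then show False
    using assms compl weakly_regular_Un by metis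
qed

lemma Ball_Cons_guarded_Cons:
  assumes "a \<in> A" "L \<subseteq> tuples A n" "L' \<subseteq> tuples A n"
  shows "{xs \<in> tuples A n. \<forall>z \<in> lists A. z # xs \<in> guarded_Cons A True L \<union> guarded_Cons A False L'}
    = L \<inter> L'"
proof -
  have "(\<forall>z \<in> lists A. z # xs \<in> guarded_Cons A True L \<union> guarded_Cons A False L') \<longleftrightarrow> xs \<in> L \<inter> L'" for xs
  proof
    assume "\<forall>z \<in> lists A. z # xs \<in> guarded_Cons A True L \<union> guarded_Cons A False L'"
    from this[rule_format, of "[]"] this[rule_format, of "[a]"] show "xs \<in> L \<inter> L'"
      using assms(1) by (auto simp: guarded_Cons_def)
  qed (auto simp: guarded_Cons_def)
  then show ?thesis
    using assms(2,3) by blast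
qed

lemma weakly_regular_not_closed_Int:
  assumes "a \<in> A" "b \<in> A" "a \<noteq> b"
  shows "\<exists>P Q. weakly_regular A 2 P \<and> weakly_regular A 2 Q \<and> \<not> weakly_regular A 2 (P \<inter> Q)"
  by (intro exI[of _ "count_eq A a"] exI[of _ "count_eq A b"] conjI weakly_regular_count_eq
      not_weakly_regular_count_eq_Int[OF assms])

lemma weakly_regular_not_closed_Ball:
  assumes "a \<in> A" "b \<in> A" "a \<noteq> b"
  shows "\<exists>P. weakly_regular A 3 P \<and> \<not> weakly_regular A 2 {xs \<in> tuples A 2. \<forall>x \<in> lists A. x # xs \<in> P}"
proof (intro exI conjI)
  let ?P = "guarded_Cons A True (count_eq A a) \<union> guarded_Cons A False (count_eq A b)"
  show "weakly_regular A 3 ?P"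
    using weakly_regular_Un[OF weakly_regular_guarded_Cons weakly_regular_guarded_Cons,
        OF weakly_regular_count_eq weakly_regular_count_eq]
    by (simp add: numeral_3_eq_3 numeral_2_eq_2)
  have "{xs \<in> tuples A 2. \<forall>x \<in> lists A. x # xs \<in> ?P} = count_eq A a \<inter> count_eq A b"
    using Ball_Cons_guarded_Cons[OF assms(1) weakly_regular_subset_tuples weakly_regular_subset_tuples,
        OF weakly_regular_count_eq weakly_regular_count_eq] .
  then show "\<not> weakly_regular A 2 {xs \<in> tuples A 2. \<forall>x \<in> lists A. x # xs \<in> ?P}"
    using not_weakly_regular_count_eq_Int[OF assms] by simp
qed

theorem mainTheorem5:
  shows
  "(\<exists>(A::nat set) n P. finite A \<and> n \<ge> 1 \<and> weakly_regular A n P \<and>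
        \<not> weakly_regular A n (tuples A n - P))
   \<and> (\<forall>(A::'a set) n P Q. finite A \<longrightarrow> n \<ge> 1 \<longrightarrow>
        weakly_regular A n P \<longrightarrow> weakly_regular A n Q \<longrightarrow> weakly_regular A n (P \<union> Q))
   \<and> (\<exists>(A::nat set) n P Q. finite A \<and> n \<ge> 1 \<and> weakly_regular A n P \<and>
        weakly_regular A n Q \<and> \<not> weakly_regular A n (P \<inter> Q))
   \<and> (\<forall>(A::'a set) n P. finite A \<longrightarrow> n \<ge> 2 \<longrightarrow> weakly_regular A n P \<longrightarrow>
        weakly_regular A (n - 1) {xs. \<exists>x1 \<in> lists A. x1 # xs \<in> P})
   \<and> (\<exists>(A::nat set) n P. finite A \<and> n \<ge> 2 \<and> weakly_regular A n P \<and>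
        \<not> weakly_regular A (n - 1)
            {xs \<in> tuples A (n - 1). \<forall>x1 \<in> lists A. x1 # xs \<in> P})"
proof -
  let ?A = "{0, 1 :: nat}"
  have ab: "0 \<in> ?A" "1 \<in> ?A" "(0::nat) \<noteq> 1"
    by simp_all
  obtain P Q where PQ: "weakly_regular ?A 2 P" "weakly_regular ?A 2 Q" "\<not> weakly_regular ?A 2 (P \<inter> Q)"
    using weakly_regular_not_closed_Int[OF ab] by blast
  then have "\<exists>(A::nat set) n P Q. finite A \<and> n \<ge> 1 \<and> weakly_regular A n P \<and>
      weakly_regular A n Q \<and> \<not> weakly_regular A n (P \<inter> Q)"
    by (intro exI[of _ ?A] exI[of _ 2] exI[of _ P] exI[of _ Q]) simp
  moreover obtain R where "weakly_regular ?A 2 R" "\<not> weakly_regular ?A 2 (tuples ?A 2 - R)"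
    using weakly_regular_not_closed_Compl[OF PQ] by blast
  then have "\<exists>(A::nat set) n P. finite A \<and> n \<ge> 1 \<and> weakly_regular A n P \<and>
      \<not> weakly_regular A n (tuples A n - P)"
    by (intro exI[of _ ?A] exI[of _ 2] exI[of _ R]) simp
  moreover obtain P' where "weakly_regular ?A 3 P'"
    "\<not> weakly_regular ?A 2 {xs \<in> tuples ?A 2. \<forall>x \<in> lists ?A. x # xs \<in> P'}"
    using weakly_regular_not_closed_Ball[OF ab] by blast
  then have "\<exists>(A::nat set) n P. finite A \<and> n \<ge> 2 \<and> weakly_regular A n P \<and>
      \<not> weakly_regular A (n - 1) {xs \<in> tuples A (n - 1). \<forall>x1 \<in> lists A. x1 # xs \<in> P}"
    by (intro exI[of _ ?A] exI[of _ 3] exI[of _ P']) simp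
  ultimately show ?thesis
    using weakly_regular_Un weakly_regular_proj by blast
qed

end
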